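(* Let $q$ be a fixed rational number. Then the set of programs $\{M\mid ME[U](M)>q\}$ is a $(\lfloor 2^q\rfloor+1)$-observable hyperproperty.
   Context: Stores map variables to values; $H$ is the high input variable and $O$ the low output variable. A trace is a sequence of stores. For a finite trace $t$, $t\circ t'$ is concatenation. A program is a set $M$ of infinite traces that is deterministic (two traces with the same initial value of $H$ are equal) and has a finite nonempty input domain $\mathbb{H}_M=\{\sigma_0(H)\}$. Input domains are unbounded in size. $M(h)$ is the output trace $(\sigma_1(O),\sigma_2(O),\dots)$ of the trace of $M$ starting with $H=h$. $\bot$ denotes termination. $M(h)=o$ means that for all $i$, $o_i=\bot$ or $M(h)_i=\bot$ or $M(h)_i=o_i$. For a distribution $\mu$ on $\mathbb{H}_M$, $\mu(O=o)=\sum_{h:M(h)=o}\mu(H=h)$, with conditional probabilities induced accordingly. $U$ is the uniform distribution on $\mathbb{H}_M$. Min-entropy QIF (log base 2): $\mathcal{V}[\mu](X)=\max_x\mu(X=x)$, $\mathcal{V}[\mu](X|Y)=\sum_y\mu(Y=y)\max_x\mu(X=x|Y=y)$, and $ME[\mu](M)=\log\frac1{\mathcal{V}[\mu](H)}-\log\frac1{\mathcal{V}[\mu](H|O)}$. $\mathit{Prop}$ is the set of programs; $\mathit{Obs}$ is the set of deterministic finite sets of finite traces. For $S\in\mathit{Obs}$ and $T\in\mathit{Prop}$, $S\le T$ iff every $t\in S$ has some $t'$ with $t\circ t'\in T$. $P\subseteq\mathit{Prop}$ is $k$-observable iff for every $S\in P$ there is $T\in\mathit{Obs}$ with $T\le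 S$ and $|T|\le k$ such that every $S'\in\mathit{Prop}$ with $T\le S'$ is in $P$. *)

theory Defs
  imports Complex_Main
begin

(* Variables: the high input Hv, the low output Ov, and other program variables. *)
datatype var = Hv | Ov | OtherVar nat

(* Values: 'v option, where None plays the role of the termination symbol bottom. *)
type_synonym 'v store = "var \<Rightarrow> 'v option"
type_synonym 'v trace = "nat \<Rightarrow> 'v store"
type_synonym 'v ftrace = "'v store list"

definition deterministic :: "'v trace set \<Rightarrow> bool" where
  "deterministic M \<longleftrightarrow> (\<forall>t1\<in>M. \<forall>t2\<in>M. t1 0 Hv = t2 0 Hv \<longrightarrow> t1 = t2)"

definition input_domain :: "'v trace set \<Rightarrow> 'v option set" where
  "input_domain M = {t 0 Hv | t. t \<in> M}"

definition Prop :: "'v trace set set" where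
  "Prop = {M. deterministic M \<and> finite (input_domain M) \<and> input_domain M \<noteq> {}}"

definition trace_of :: "'v trace set \<Rightarrow> 'v option \<Rightarrow> 'v trace" where
  "trace_of M h = (THE t. t \<in> M \<and> t 0 Hv = h)"

definition out :: "'v trace set \<Rightarrow> 'v option \<Rightarrow> (nat \<Rightarrow> 'v option)" where
  "out M h = (\<lambda>i. trace_of M h (Suc i) Ov)"

definition out_is :: "'v trace set \<Rightarrow> 'v option \<Rightarrow> (nat \<Rightarrow> 'v option) \<Rightarrow> bool" where
  "out_is M h ob \<longleftrightarrow> (\<forall>i. ob i = None \<or> out M h i = None \<or> out M h i = ob i)"

definition outputs :: "'v trace set \<Rightarrow> (nat \<Rightarrow> 'v option) set" where
  "outputs M = out M ` input_domain M"

definition prob_O :: "('v option \<Rightarrow> real) \<Rightarrow> 'v trace set \<Rightarrow> (nat \<Rightarrow> 'v option) \<Rightarrow> real" where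
  "prob_O mu M ob = (\<Sum>h\<in>{h\<in>input_domain M. out_is M h ob}. mu h)"

definition cond_prob :: "('v option \<Rightarrow> real) \<Rightarrow> 'v trace set \<Rightarrow> 'v option \<Rightarrow> (nat \<Rightarrow> 'v option) \<Rightarrow> real" where
  "cond_prob mu M h ob = (if out_is M h ob then mu h else 0) / prob_O mu M ob"

definition V_H :: "('v option \<Rightarrow> real) \<Rightarrow> 'v trace set \<Rightarrow> real" where
  "V_H mu M = Max (mu ` input_domain M)"

definition V_HO :: "('v option \<Rightarrow> real) \<Rightarrow> 'v trace set \<Rightarrow> real" where
  "V_HO mu M = (\<Sum>ob\<in>outputs M. prob_O mu M ob * Max ((\<lambda>h. cond_prob mu M h ob) ` input_domain M))"

definition ME :: "('v option \<Rightarrow> real) \<Rightarrow> 'v trace set \<Rightarrow> real" where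
  "ME mu M = log 2 (1 / V_H mu M) - log 2 (1 / V_HO mu M)"

definition U :: "'v trace set \<Rightarrow> 'v option \<Rightarrow> real" where
  "U M h = (if h \<in> input_domain M then 1 / real (card (input_domain M)) else 0)"

definition Obs :: "'v ftrace set set" where
  "Obs = {S. finite S \<and> (\<forall>t1\<in>S. \<forall>t2\<in>S. t1 \<noteq> [] \<longrightarrow> t2 \<noteq> [] \<longrightarrow>
                 (t1 ! 0) Hv = (t2 ! 0) Hv \<longrightarrow> t1 = t2)}"

definition tconcat :: "'v ftrace \<Rightarrow> 'v trace \<Rightarrow> 'v trace" where
  "tconcat t t' = (\<lambda>i. if i < length t then t ! i else t' (i - length t))"

definition obs_le :: "'v ftrace set \<Rightarrow> 'v trace set \<Rightarrow> bool" where
  "obs_le S T \<longleftrightarrow> (\<forall>t\<in>S. \<exists>t'. tconcat t t' \<in> T)"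

definition k_observable :: "'v trace set set \<Rightarrow> nat \<Rightarrow> bool" where
  "k_observable P k \<longleftrightarrow> P \<subseteq> Prop \<and>
     (\<forall>S\<in>P. \<exists>T\<in>Obs. obs_le T S \<and> card T \<le> k \<and> (\<forall>S'\<in>Prop. obs_le T S' \<longrightarrow> S' \<in> P))"

end

theory Submission
  imports Defs
begin

text \<open>Under the uniform prior every output class contributes exactly 1/|H| to the conditional
vulnerability, so ME[U](M) = log |outputs M| and ME[U](M) > q means that M has at least
floor(2^q) + 1 distinct outputs. That many inputs with pairwise distinct outputs, observed through
trace prefixes long enough to separate these outputs, witness this: every program extending the
prefixes has the same separated outputs on these inputs.\<close>

lemma Prop_finite_input_domain: "M \<in> Prop \<Longrightarrow> finite (input_domain M)"
  and Prop_input_domain_nonempty: "M \<in> Prop \<Longrightarrow> input_domain M \<noteq> {}"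
  by (simp_all add: Prop_def)

lemma Prop_finite_outputs: "M \<in> Prop \<Longrightarrow> finite (outputs M)"
  and Prop_card_outputs_pos: "M \<in> Prop \<Longrightarrow> card (outputs M) > 0"
  by (simp_all add: Prop_def outputs_def card_gt_0_iff)

lemma trace_of_eq:
  assumes "M \<in> Prop" "t \<in> M"
  shows "trace_of M (t 0 Hv) = t"
  unfolding trace_of_def
  using assms by (intro the_equality) (auto simp: Prop_def deterministic_def)

lemma trace_of_spec:
  assumes "M \<in> Prop" "h \<in> input_domain M"
  shows "trace_of M h \<in> M" "trace_of M h 0 Hv = h"
proof -
  obtain t where "t \<in> M" "h = t 0 Hv"
    using assms(2) by (auto simp: input_domain_def)
  then show "trace_of M h \<in> M" "trace_of M h 0 Hv = h"
    using trace_of_eq[OF assms(1)] by simp_all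
qed

lemma V_H_uniform:
  assumes "M \<in> Prop"
  shows "V_H (U M) M = 1 / real (card (input_domain M))"
proof -
  have "U M ` input_domain M = {1 / real (card (input_domain M))}"
    using Prop_input_domain_nonempty[OF assms] by (auto simp: U_def)
  then show ?thesis
    by (simp add: V_H_def)
qed

lemma prob_O_uniform:
  "prob_O (U M) M ob = real (card {h \<in> input_domain M. out_is M h ob}) / real (card (input_domain M))"
  unfolding prob_O_def by (simp add: U_def)

lemma out_is_out: "out_is M h (out M h)"
  by (simp add: out_is_def)

lemma V_HO_term_uniform:
  assumes "M \<in> Prop" "ob \<in> outputs M"
  shows "prob_O (U M) M ob * Max ((\<lambda>h. cond_prob (U M) M h ob) ` input_domain M)
           = 1 / real (card (input_domain M))"
proof -
  let ?D = "input_domain M" and ?p = "prob_O (U M) M ob"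
  obtain h0 where h0: "h0 \<in> ?D" "ob = out M h0"
    using assms(2) by (auto simp: outputs_def)
  have "h0 \<in> {h \<in> ?D. out_is M h ob}"
    using h0 out_is_out by blast
  then have "card {h \<in> ?D. out_is M h ob} > 0" "card ?D > 0"
    using Prop_finite_input_domain[OF assms(1)] by (auto simp: card_gt_0_iff)
  then have p_pos: "?p > 0"
    by (simp add: prob_O_uniform)
  have "Max ((\<lambda>h. cond_prob (U M) M h ob) ` ?D) = 1 / real (card ?D) / ?p"
  proof (rule Max_eqI)
    show "finite ((\<lambda>h. cond_prob (U M) M h ob) ` ?D)"
      using Prop_finite_input_domain[OF assms(1)] by simp
    show "1 / real (card ?D) / ?p \<in> (\<lambda>h. cond_prob (U M) M h ob) ` ?D"
      using h0 by (intro rev_image_eqI[OF h0(1)]) (simp add: cond_prob_def U_def out_is_out)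
  next
    fix y assume "y \<in> (\<lambda>h. cond_prob (U M) M h ob) ` ?D"
    then show "y \<le> 1 / real (card ?D) / ?p"
      using p_pos by (auto simp: cond_prob_def U_def divide_right_mono)
  qed
  then show ?thesis
    using p_pos by simp
qed

lemma ME_uniform_eq_log_card_outputs:
  assumes "M \<in> Prop"
  shows "ME (U M) M = log 2 (real (card (outputs M)))"
proof -
  let ?n = "real (card (input_domain M))" and ?m = "real (card (outputs M))"
  have "V_HO (U M) M = ?m / ?n"
    unfolding V_HO_def by (simp add: V_HO_term_uniform[OF assms])
  moreover have "?n > 0"
    using Prop_finite_input_domain[OF assms] Prop_input_domain_nonempty[OF assms]
    by (simp add: card_gt_0_iff)
  moreover have "?m > 0"
    using Prop_card_outputs_pos[OF assms] by simp
  ultimately show ?thesis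
    by (simp add: ME_def V_H_uniform[OF assms] log_divide)
qed

lemma less_of_nat_iff_Suc_nat_floor_le:
  fixes x :: real
  assumes "x \<ge> 0"
  shows "x < real m \<longleftrightarrow> nat \<lfloor>x\<rfloor> + 1 \<le> m"
  using assms by linarith

lemma ME_uniform_gt_iff:
  assumes "M \<in> Prop"
  shows "ME (U M) M > y \<longleftrightarrow> nat \<lfloor>2 powr y\<rfloor> + 1 \<le> card (outputs M)"
proof -
  have "ME (U M) M > y \<longleftrightarrow> 2 powr y < real (card (outputs M))"
    using Prop_card_outputs_pos[OF assms]
    by (simp add: ME_uniform_eq_log_card_outputs[OF assms] less_log_iff)
  then show ?thesis
    using less_of_nat_iff_Suc_nat_floor_le[of "2 powr y"] by simp
qed

lemma ex_subset_inj_on_card: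
  assumes "k \<le> card (f ` A)"
  obtains B where "B \<subseteq> A" "card B = k" "inj_on f B"
proof -
  obtain C where C: "C \<subseteq> f ` A" "card C = k" "finite C"
    by (rule obtain_subset_with_card_n[OF assms])
  define B where "B = inv_into A f ` C"
  have "card B = k"
    using C by (simp add: B_def card_image inj_on_inv_into)
  moreover have "f ` B = C"
    using C(1) by (simp add: B_def image_inv_into_cancel)
  moreover have "finite B"
    using C(3) by (simp add: B_def)
  ultimately have "inj_on f B"
    using C(2) by (intro eq_card_imp_inj_on) simp_all
  moreover have "B \<subseteq> A"
    using C(1) by (auto simp: B_def inv_into_into)
  ultimately show ?thesis
    using that \<open>card B = k\<close> by blast
qed

lemma ex_separating_prefix_length:
  fixes f :: "'a \<Rightarrow> nat \<Rightarrow> 'b"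
  assumes "finite A" "inj_on f A"
  obtains N where "\<And>a b. a \<in> A \<Longrightarrow> b \<in> A \<Longrightarrow> (\<forall>i<N. f a i = f b i) \<Longrightarrow> a = b"
proof -
  define sep where "sep a b = (LEAST i. f a i \<noteq> f b i)" for a b
  have "finite (case_prod sep ` (A \<times> A))"
    using assms(1) by simp
  then obtain N where N: "\<forall>a\<in>A. \<forall>b\<in>A. sep a b < N"
    by (auto simp: finite_nat_set_iff_bounded)
  have "a = b" if "a \<in> A" "b \<in> A" "\<forall>i<N. f a i = f b i" for a b
  proof (rule ccontr)
    assume "a \<noteq> b"
    then have "f a \<noteq> f b"
      using assms(2) that(1,2) by (auto simp: inj_on_def)
    then have "\<exists>i. f a i \<noteq> f b i"
      by (simp add: fun_eq_iff)
    then have "f a (sep a b) \<noteq> f b (sep a b)"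
      unfolding sep_def by (rule LeastI_ex)
    moreover have "sep a b < N"
      using N that(1,2) by blast
    ultimately show False
      using that(3) by blast
  qed
  then show ?thesis
    using that by blast
qed

definition prefix_of :: "'v trace set \<Rightarrow> nat \<Rightarrow> 'v option \<Rightarrow> 'v ftrace" where
  "prefix_of M n h = map (trace_of M h) [0..<n]"

lemma prefixes_in_Obs:
  assumes "M \<in> Prop" "Hs \<subseteq> input_domain M" "finite Hs"
  shows "prefix_of M (Suc n) ` Hs \<in> Obs"
proof -
  have "(prefix_of M (Suc n) h ! 0) Hv = h" if "h \<in> Hs" for h
    using trace_of_spec(2)[OF assms(1)] that assms(2)
    by (auto simp: prefix_of_def simp del: upt_Suc)
  then show ?thesis
    using assms(3) by (auto simp: Obs_def)
qed

lemma obs_le_prefixes: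
  assumes "M \<in> Prop" "Hs \<subseteq> input_domain M"
  shows "obs_le (prefix_of M n ` Hs) M"
  unfolding obs_le_def
proof
  fix t assume "t \<in> prefix_of M n ` Hs"
  then obtain h where h: "h \<in> Hs" "t = prefix_of M n h"
    by blast
  have "tconcat t (\<lambda>i. trace_of M h (i + n)) = trace_of M h"
    using h(2) by (simp add: tconcat_def prefix_of_def fun_eq_iff)
  moreover have "trace_of M h \<in> M"
    using trace_of_spec(1)[OF assms(1)] h(1) assms(2) by blast
  ultimately show "\<exists>t'. tconcat t t' \<in> M"
    by (intro exI[of _ "\<lambda>i. trace_of M h (i + n)"]) simp
qed

text \<open>A prefix of length Suc N fixes the outputs at indices i < N, because out M h i is read
off the state with index Suc i.\<close>

lemma extension_of_prefix:
  assumes "M \<in> Prop" "M' \<in> Prop" "h \<in> input_domain M"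
    and ext: "tconcat (prefix_of M (Suc N) h) t' \<in> M'"
  shows "h \<in> input_domain M'" "\<forall>i<N. out M' h i = out M h i"
proof -
  let ?t = "tconcat (prefix_of M (Suc N) h) t'"
  have "?t 0 Hv = h"
    using trace_of_spec(2)[OF assms(1,3)] by (simp add: tconcat_def prefix_of_def del: upt_Suc)
  then have "trace_of M' h = ?t"
    using trace_of_eq[OF assms(2) ext] by simp
  then show "\<forall>i<N. out M' h i = out M h i"
    by (simp add: out_def tconcat_def prefix_of_def del: upt_Suc)
  show "h \<in> input_domain M'"
    using ext \<open>?t 0 Hv = h\<close> unfolding input_domain_def by (auto intro!: exI[of _ ?t])
qed

lemma k_observable_card_outputs_ge:
  "k_observable {M :: 'v trace set. M \<in> Prop \<and> k \<le> card (outputs M)} k"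
  unfolding k_observable_def
proof (intro conjI ballI)
  show "{M :: 'v trace set. M \<in> Prop \<and> k \<le> card (outputs M)} \<subseteq> Prop"
    by blast
  fix S :: "'v trace set"
  assume "S \<in> {M. M \<in> Prop \<and> k \<le> card (outputs M)}"
  then have S: "S \<in> Prop" "k \<le> card (out S ` input_domain S)"
    by (simp_all add: outputs_def)
  obtain Hs where Hs: "Hs \<subseteq> input_domain S" "card Hs = k" "inj_on (out S) Hs"
    using ex_subset_inj_on_card[OF S(2)] by blast
  have "finite Hs"
    using Hs(1) Prop_finite_input_domain[OF S(1)] finite_subset by blast
  then obtain N where N: "\<And>a b. a \<in> Hs \<Longrightarrow> b \<in> Hs \<Longrightarrow> (\<forall>i<N. out S a i = out S b i) \<Longrightarrow> a = b"
    using ex_separating_prefix_length Hs(3) by blast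
  define T where "T = prefix_of S (Suc N) ` Hs"
  have "S' \<in> {M. M \<in> Prop \<and> k \<le> card (outputs M)}" if S': "S' \<in> Prop" "obs_le T S'" for S'
  proof -
    have agree: "h \<in> input_domain S' \<and> (\<forall>i<N. out S' h i = out S h i)" if h: "h \<in> Hs" for h
    proof -
      obtain t' where "tconcat (prefix_of S (Suc N) h) t' \<in> S'"
        using S'(2) h by (auto simp: obs_le_def T_def)
      then show ?thesis
        using extension_of_prefix[OF S(1) S'(1)] h Hs(1) by blast
    qed
    have "inj_on (out S') Hs"
    proof (rule inj_onI)
      fix a b assume ab: "a \<in> Hs" "b \<in> Hs" "out S' a = out S' b"
      then have "\<forall>i<N. out S a i = out S b i"
        using agree[OF ab(1)] agree[OF ab(2)] by simp
      then show "a = b"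
        using N ab(1,2) by blast
    qed
    moreover have "out S' ` Hs \<subseteq> outputs S'"
      using agree by (auto simp: outputs_def)
    ultimately have "k \<le> card (outputs S')"
      using Hs(2) card_mono[OF Prop_finite_outputs[OF S'(1)]] card_image by metis
    then show ?thesis
      using S'(1) by simp
  qed
  moreover have "T \<in> Obs" "obs_le T S" "card T \<le> k"
    using prefixes_in_Obs[OF S(1) Hs(1) \<open>finite Hs\<close>] obs_le_prefixes[OF S(1) Hs(1)]
      card_image_le[OF \<open>finite Hs\<close>] Hs(2)
    by (simp_all add: T_def)
  ultimately show "\<exists>T\<in>Obs. obs_le T S \<and> card T \<le> k \<and>
      (\<forall>S'\<in>Prop. obs_le T S' \<longrightarrow> S' \<in> {M. M \<in> Prop \<and> k \<le> card (outputs M)})"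
    by blast
qed

theorem theorem10:
  fixes q :: rat
  shows "k_observable {M :: 'v trace set. M \<in> Prop \<and> ME (U M) M > real_of_rat q}
           (nat \<lfloor>2 powr real_of_rat q\<rfloor> + 1)"
proof -
  have "{M :: 'v trace set. M \<in> Prop \<and> ME (U M) M > real_of_rat q}
      = {M. M \<in> Prop \<and> nat \<lfloor>2 powr real_of_rat q\<rfloor> + 1 \<le> card (outputs M)}"
    using ME_uniform_gt_iff by blast
  then show ?thesis
    using k_observable_card_outputs_ge by simp
qed

end
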